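(* Let $A$ be an algebra over a field $K$ and let $T:A\to A$ be a weak multiplier of $A$ such that $\langle T(A)\rangle\cap A_0=\{0\}$. Then $T$ is $K$-linear.
   Context: An algebra over $K$ is a $K$-vector space with a bilinear, not necessarily associative multiplication. A map $T:A\to A$ (not assumed linear) is a weak multiplier if $xT(y)=T(x)y$ for all $x,y\in A$. $\mathrm{Ann}_l(A)=\{a\in A: ax=0\ \forall x\in A\}$, $\mathrm{Ann}_r(A)=\{a\in A: xa=0\ \forall x\in A\}$, and $A_0=\mathrm{Ann}_l(A)\cap\mathrm{Ann}_r(A)$. For a subset $X\subseteq A$, $\langle X\rangle$ is the linear subspace spanned by $X$. *)

theory Defs
  imports Main "HOL.Vector_Spaces"
begin

definition algebra_over :: "('k::field \<Rightarrow> 'v::ab_group_add \<Rightarrow> 'v) \<Rightarrow> ('v \<Rightarrow> 'v \<Rightarrow> 'v) \<Rightarrow> bool" where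
  "algebra_over scale mult \<longleftrightarrow>
     vector_space scale \<and>
     (\<forall>x. Vector_Spaces.linear scale scale (mult x)) \<and>
     (\<forall>y. Vector_Spaces.linear scale scale (\<lambda>x. mult x y))"

definition weak_multiplier :: "('v \<Rightarrow> 'v \<Rightarrow> 'v) \<Rightarrow> ('v \<Rightarrow> 'v) \<Rightarrow> bool" where
  "weak_multiplier mult T \<longleftrightarrow> (\<forall>x y. mult x (T y) = mult (T x) y)"

definition Ann_l :: "('v \<Rightarrow> 'v \<Rightarrow> 'v::zero) \<Rightarrow> 'v set" where
  "Ann_l mult = {a. \<forall>x. mult a x = 0}"

definition Ann_r :: "('v \<Rightarrow> 'v \<Rightarrow> 'v::zero) \<Rightarrow> 'v set" where
  "Ann_r mult = {a. \<forall>x. mult x a = 0}"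

definition A0 :: "('v \<Rightarrow> 'v \<Rightarrow> 'v::zero) \<Rightarrow> 'v set" where
  "A0 mult = Ann_l mult \<inter> Ann_r mult"

end

theory Submission
  imports Defs
begin

text \<open>A weak multiplier satisfies \<open>z T(x) = T(z) x\<close>, so its products with any \<open>z\<close> on either
  side are linear in the argument. Hence the failure of additivity or homogeneity of \<open>T\<close> is an
  element annihilated from both sides, i.e. lies in \<open>A\<^sub>0\<close>; it also lies in the span of the
  image of \<open>T\<close>, and that span meets \<open>A\<^sub>0\<close> trivially.\<close>

lemma algebra_over_distrib:
  assumes "algebra_over scale mult"
  shows "mult x (a + b) = mult x a + mult x b"
    and "mult (a + b) y = mult a y + mult b y"
    and "mult x (scale c a) = scale c (mult x a)"
    and "mult (scale c a) y = scale c (mult a y)"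
  using assms unfolding algebra_over_def linear_iff by blast+

lemma algebra_over_diff:
  assumes "algebra_over scale mult"
  shows "mult x (a - b) = mult x a - mult x b"
    and "mult (a - b) y = mult a y - mult b y"
  by (metis assms algebra_over_distrib(1,2) add_diff_cancel diff_add_cancel)+

lemma diff_in_A0_if_same_products:
  assumes "algebra_over scale mult"
    and "\<And>z. mult z u = mult z v" and "\<And>z. mult u z = mult v z"
  shows "u - v \<in> A0 mult"
  using assms by (simp add: A0_def Ann_l_def Ann_r_def algebra_over_diff)

lemma weak_multiplier_add_defect_in_A0:
  assumes alg: "algebra_over scale mult" and wm: "weak_multiplier mult T"
  shows "T (a + b) - (T a + T b) \<in> A0 mult"
proof (rule diff_in_A0_if_same_products[OF alg])
  have TT: "mult x (T y) = mult (T x) y" for x y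
    using wm unfolding weak_multiplier_def by blast
  show "mult z (T (a + b)) = mult z (T a + T b)" for z
    by (simp add: TT algebra_over_distrib[OF alg])
  show "mult (T (a + b)) z = mult (T a + T b) z" for z
    by (simp add: TT[symmetric] algebra_over_distrib[OF alg])
qed

lemma weak_multiplier_scale_defect_in_A0:
  assumes alg: "algebra_over scale mult" and wm: "weak_multiplier mult T"
  shows "T (scale c a) - scale c (T a) \<in> A0 mult"
proof (rule diff_in_A0_if_same_products[OF alg])
  have TT: "mult x (T y) = mult (T x) y" for x y
    using wm unfolding weak_multiplier_def by blast
  show "mult z (T (scale c a)) = mult z (scale c (T a))" for z
    by (simp add: TT algebra_over_distrib[OF alg])
  show "mult (T (scale c a)) z = mult (scale c (T a)) z" for z
    by (simp add: TT[symmetric] algebra_over_distrib[OF alg])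
qed

theorem proposition2p3:
  fixes scale :: "'k::field \<Rightarrow> 'v::ab_group_add \<Rightarrow> 'v"
    and mult :: "'v \<Rightarrow> 'v \<Rightarrow> 'v"
    and T :: "'v \<Rightarrow> 'v"
  assumes "algebra_over scale mult"
    and "weak_multiplier mult T"
    and "module.span scale (range T) \<inter> A0 mult = {0}"
  shows "Vector_Spaces.linear scale scale T"
proof -
  interpret vector_space scale
    using assms(1) unfolding algebra_over_def by blast
  have span_A0_zero: "d = 0" if "d \<in> span (range T)" and "d \<in> A0 mult" for d
    using that assms(3) by blast
  have add: "T (a + b) = T a + T b" for a b
    using span_A0_zero[OF _ weak_multiplier_add_defect_in_A0[OF assms(1,2)]]
    by (simp add: span_diff span_add span_base)
  have scale: "T (scale c a) = scale c (T a)" for c a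
    using span_A0_zero[OF _ weak_multiplier_scale_defect_in_A0[OF assms(1,2)]]
    by (simp add: span_diff span_scale span_base)
  show ?thesis
    unfolding linear_iff using add scale vector_space_axioms by blast
qed

end
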